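(* Let $X$ be a real random variable such that $\mathbb{E}(|X|^{2p})\le2^{p+1}p!$ for every integer $p\ge1$. Then for all $\lambda\in\mathbb{R}$ the series below converges and $$1+\sum_{k=2}^\infty\frac{\lambda^k}{k!}\mathbb{E}(|X|^k)\le\exp(9\lambda^2/4).$$ *)

theory Defs
  imports "HOL-Probability.Probability"
begin

end

theory Submission
  imports Defs
begin

text \<open>Write \<open>\<mu> k = \<bar>\<lambda>\<bar>^k E|X|^k\<close>. By AM-GM, \<open>\<mu> (2q+3) \<le> 3/8 \<mu> (2q+2) + 2/3 \<mu> (2q+4)\<close>, so
  every odd term of the series can be charged to its two even neighbours. The hypothesis gives
  \<open>\<mu> (2q+2) \<le> 2^(q+2) (q+1)! \<lambda>^(2q+2)\<close>, and after the regrouping each even moment contributes at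
  most \<open>(9\<lambda>\<^sup>2/4)^(q+1) / (q+1)!\<close>, a term of the exponential series. The AM-GM weight \<open>3/4\<close> is
  what makes this estimate exact for \<open>q = 0\<close>.\<close>

lemma two_power_mult_fact_square_le_fact_double:
  "2 ^ n * (fact n)\<^sup>2 \<le> (fact (2 * n) :: real)"
proof (induction n)
  case 0
  then show ?case by simp
next
  case (Suc n)
  have "2 ^ Suc n * (fact (Suc n))\<^sup>2 = 2 * (real n + 1)\<^sup>2 * (2 ^ n * (fact n)\<^sup>2 :: real)"
    by (simp add: algebra_simps power2_eq_square)
  also have "\<dots> \<le> 2 * (real n + 1)\<^sup>2 * fact (2 * n)"
    using Suc by (intro mult_left_mono) auto
  also have "\<dots> \<le> (2 * real n + 2) * (2 * real n + 1) * fact (2 * n)"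
    by (intro mult_right_mono) (auto simp: power2_eq_square algebra_simps)
  also have "\<dots> = fact (2 * Suc n)"
    by (simp add: algebra_simps)
  finally show ?case .
qed

lemma sum_power_div_fact_le_exp_minus_one:
  fixes x :: real
  assumes "0 \<le> x"
  shows "(\<Sum>q<n. x ^ (q + 1) / fact (q + 1)) \<le> exp x - 1"
proof -
  have exp_sums: "(\<lambda>q. x ^ q / fact q) sums exp x"
    using exp_converges[of x] by (simp add: divide_inverse_commute)
  have "1 + (\<Sum>q<n. x ^ (q + 1) / fact (q + 1)) = (\<Sum>q<Suc n. x ^ q / fact q)"
    by (subst sum.lessThan_Suc_shift) simp
  also have "\<dots> \<le> exp x"
    using sum_le_suminf[OF sums_summable[OF exp_sums], of "{..<Suc n}"] sums_unique[OF exp_sums] assms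
    by auto
  finally show ?thesis by simp
qed

lemma summable_and_suminf_le_if_abs_sums_le:
  fixes f :: "nat \<Rightarrow> real"
  assumes "\<And>n. (\<Sum>k<n. \<bar>f k\<bar>) \<le> B"
  shows "summable f \<and> suminf f \<le> B"
proof
  show "summable f"
    by (rule summable_rabs_cancel, rule summableI_nonneg_bounded[where x = B]) (simp_all add: assms)
  have "(\<Sum>k<n. f k) \<le> B" for n
    by (rule order_trans[OF sum_mono assms[of n]]) simp
  then show "suminf f \<le> B"
    using \<open>summable f\<close> by (intro suminf_le_const)
qed

lemma power_Suc_le_mean:
  fixes t c :: real
  assumes "0 \<le> t" "0 < c"
  shows "t ^ (n + 1) \<le> (c * t ^ n + t ^ (n + 2) / c) / 2"
proof -
  have "0 \<le> t ^ n * (t - c)\<^sup>2 / (2 * c)"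
    using assms by simp
  also have "\<dots> = (c * t ^ n + t ^ (n + 2) / c) / 2 - t ^ (n + 1)"
    using assms by (simp add: field_simps power2_eq_square power_add)
  finally show ?thesis by simp
qed

lemma integral_power_Suc_le_mean:
  fixes g :: "'a \<Rightarrow> real" and c :: real
  assumes "\<And>x. 0 \<le> g x" "0 < c"
    and "integrable M (\<lambda>x. g x ^ n)" "integrable M (\<lambda>x. g x ^ (n + 1))"
    and "integrable M (\<lambda>x. g x ^ (n + 2))"
  shows "(\<integral>x. g x ^ (n + 1) \<partial>M) \<le> (c * (\<integral>x. g x ^ n \<partial>M) + (\<integral>x. g x ^ (n + 2) \<partial>M) / c) / 2"
proof -
  have "(\<integral>x. g x ^ (n + 1) \<partial>M) \<le> (\<integral>x. (c * g x ^ n + g x ^ (n + 2) / c) / 2 \<partial>M)"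
    using assms by (intro integral_mono power_Suc_le_mean) auto
  also have "\<dots> = (c * (\<integral>x. g x ^ n \<partial>M) + (\<integral>x. g x ^ (n + 2) \<partial>M) / c) / 2"
    using assms by simp
  finally show ?thesis .
qed

lemma (in finite_measure) integrable_abs_power_le:
  fixes X :: "'a \<Rightarrow> real"
  assumes "X \<in> borel_measurable M"
    and "integrable M (\<lambda>x. \<bar>X x\<bar> ^ n)" "k \<le> n"
  shows "integrable M (\<lambda>x. \<bar>X x\<bar> ^ k)"
proof (rule Bochner_Integration.integrable_bound)
  show "integrable M (\<lambda>x. 1 + \<bar>X x\<bar> ^ n)"
    using assms by simp
  show "(\<lambda>x. \<bar>X x\<bar> ^ k) \<in> borel_measurable M"
    using assms(1) by measurable
  have "\<bar>X x\<bar> ^ k \<le> 1 + \<bar>X x\<bar> ^ n" for x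
  proof (cases "\<bar>X x\<bar> \<le> 1")
    case True
    then show ?thesis by (simp add: power_le_one add_increasing2)
  next
    case False
    then show ?thesis using \<open>k \<le> n\<close> by (simp add: power_increasing add_increasing)
  qed
  then show "AE x in M. norm (\<bar>X x\<bar> ^ k) \<le> norm (1 + \<bar>X x\<bar> ^ n)"
    by simp
qed

text \<open>Charging the odd term \<open>\<mu>\<^sub>2\<^sub>q\<^sub>+\<^sub>3/(2q+3)!\<close> to \<open>\<mu>\<^sub>2\<^sub>q\<^sub>+\<^sub>2\<close> and \<open>\<mu>\<^sub>2\<^sub>q\<^sub>+\<^sub>4\<close>, the even
  moment \<open>\<mu>\<^sub>2\<^sub>q\<^sub>+\<^sub>2\<close> receives \<open>direct_weight q\<close> from the terms of index \<open>2q+2\<close> and \<open>2q+3\<close>, and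
  \<open>carried_weight q\<close> from the term of index \<open>2q+1\<close>, which is absent for \<open>q = 0\<close> because the
  series starts at index 2.\<close>

definition direct_weight :: "nat \<Rightarrow> real" where
  "direct_weight q = 1 / fact (2 * q + 2) + 3 / (8 * fact (2 * q + 3))"

definition carried_weight :: "nat \<Rightarrow> real" where
  "carried_weight q = (if q = 0 then 0 else 2 / (3 * fact (2 * q + 1)))"

lemma affine_le_nine_quarters_power:
  assumes "2 \<le> q"
  shows "2 * (17/16 + (4 * real q + 4) / 3) \<le> (9/4 :: real) ^ (q + 1)"
  using assms
proof (induction q rule: nat_induct_at_least)
  case base
  then show ?case by (simp add: eval_nat_numeral)
next
  case (Suc q)
  have "10 \<le> 2 * (17/16 + (4 * real q + 4) / 3)"
    using Suc.hyps by (simp add: field_simps)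
  define R where "R = (9/4 :: real) ^ (q + 1)"
  have "2 * (17/16 + (4 * real (Suc q) + 4) / 3) = 2 * (17/16 + (4 * real q + 4) / 3) + 8/3"
    by (simp add: field_simps)
  also have "\<dots> \<le> 9/4 * R"
    using Suc.IH \<open>10 \<le> 2 * (17/16 + (4 * real q + 4) / 3)\<close> unfolding R_def[symmetric] by (simp add: field_simps)
  also have "\<dots> = (9/4) ^ (Suc q + 1)"
    by (simp add: R_def)
  finally show ?case .
qed

lemma scaled_weight_le_exp_coeff:
  "2 ^ (q + 2) * fact (q + 1) * (direct_weight q + carried_weight q) \<le> (9/4) ^ (q + 1) / fact (q + 1)"
proof -
  \<comment> \<open>For \<open>q = 1\<close> the factorial estimate used in the general case is too crude.\<close>
  consider "q = 0" | "q = 1" | "2 \<le> q" by linarith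
  then show ?thesis
  proof cases
    case 3
    define F where "F = (fact (2 * q + 2) :: real)"
    have "F > 0" by (simp add: F_def)
    have fact_2q3: "fact (2 * q + 3) = (2 * real q + 3) * F"
      by (simp add: F_def numeral_3_eq_3 algebra_simps)
    have fact_2q1: "fact (2 * q + 1) = F / (2 * real q + 2)"
      by (simp add: F_def numeral_2_eq_2 field_simps)
    have "direct_weight q + carried_weight q = (1 + 3 / (8 * (2 * real q + 3)) + 2 * (2 * real q + 2) / 3) / F"
      unfolding direct_weight_def carried_weight_def fact_2q3 fact_2q1 F_def[symmetric]
      using 3 \<open>F > 0\<close> by (simp add: add_divide_distrib)
    also have "\<dots> \<le> (17/16 + (4 * real q + 4) / 3) / F"
      using 3 \<open>F > 0\<close> by (intro divide_right_mono) (simp_all add: field_simps)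
    finally have "2 ^ (q + 2) * fact (q + 1) * (direct_weight q + carried_weight q)
        \<le> 2 ^ (q + 2) * fact (q + 1) * ((17/16 + (4 * real q + 4) / 3) / F)"
      by (intro mult_left_mono) simp_all
    also have "\<dots> \<le> 2 ^ (q + 2) * fact (q + 1) * ((17/16 + (4 * real q + 4) / 3) / (2 ^ (q + 1) * (fact (q + 1))\<^sup>2))"
      using two_power_mult_fact_square_le_fact_double[of "q + 1"]
      by (intro mult_left_mono divide_left_mono) (simp_all add: F_def)
    also have "\<dots> = 2 * (17/16 + (4 * real q + 4) / 3) / fact (q + 1)"
      by (simp add: power2_eq_square field_simps del: fact_Suc)
    also have "\<dots> \<le> (9/4) ^ (q + 1) / fact (q + 1)"
      using 3 by (intro divide_right_mono affine_le_nine_quarters_power) simp_all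
    finally show ?thesis .
  qed (simp_all add: direct_weight_def carried_weight_def fact_numeral)
qed

lemma sum_double_le_regrouped:
  fixes \<mu> :: "nat \<Rightarrow> real"
  assumes odd_le_mean: "\<And>n. \<mu> (n + 1) \<le> (3/4 * \<mu> n + 4/3 * \<mu> (n + 2)) / 2"
  shows "(\<Sum>k<2 * N. \<mu> (k + 2) / fact (k + 2))
    \<le> (\<Sum>q<N. (direct_weight q + carried_weight q) * \<mu> (2 * q + 2)) + carried_weight N * \<mu> (2 * N + 2)"
proof (induction N)
  case 0
  then show ?case by (simp add: carried_weight_def)
next
  case (Suc N)
  define summand where "summand k = \<mu> (k + 2) / fact (k + 2)" for k
  have carried_Suc: "carried_weight (N + 1) = 2 / (3 * fact (2 * N + 3))"
    by (simp add: carried_weight_def eval_nat_numeral)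
  have "summand (2 * N + 1) = \<mu> (2 * N + 3) / fact (2 * N + 3)"
    by (simp add: summand_def eval_nat_numeral)
  also have "\<dots> \<le> (3/8 * \<mu> (2 * N + 2) + 2/3 * \<mu> (2 * N + 4)) / fact (2 * N + 3)"
    using odd_le_mean[of "2 * N + 2"] by (intro divide_right_mono) (simp_all add: eval_nat_numeral)
  finally have "summand (2 * N) + summand (2 * N + 1)
      \<le> \<mu> (2 * N + 2) / fact (2 * N + 2) + (3/8 * \<mu> (2 * N + 2) + 2/3 * \<mu> (2 * N + 4)) / fact (2 * N + 3)"
    by (simp add: summand_def)
  also have "\<dots> = direct_weight N * \<mu> (2 * N + 2) + carried_weight (N + 1) * \<mu> (2 * N + 4)"
    unfolding direct_weight_def carried_Suc by (simp add: add_divide_distrib algebra_simps)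
  finally have pair_le: "summand (2 * N) + summand (2 * N + 1)
      \<le> direct_weight N * \<mu> (2 * N + 2) + carried_weight (N + 1) * \<mu> (2 * N + 4)" .
  have "(\<Sum>k<2 * Suc N. summand k) = (\<Sum>k<2 * N. summand k) + summand (2 * N) + summand (2 * N + 1)"
    by simp
  also have "\<dots> \<le> (\<Sum>q<N. (direct_weight q + carried_weight q) * \<mu> (2 * q + 2))
      + carried_weight N * \<mu> (2 * N + 2) + direct_weight N * \<mu> (2 * N + 2)
      + carried_weight (N + 1) * \<mu> (2 * N + 4)"
    using Suc.IH pair_le by (simp add: summand_def)
  also have "\<dots> = (\<Sum>q<Suc N. (direct_weight q + carried_weight q) * \<mu> (2 * q + 2))
      + carried_weight (Suc N) * \<mu> (2 * Suc N + 2)"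
    by (simp add: algebra_simps eval_nat_numeral)
  finally show ?case
    by (simp add: summand_def)
qed

lemma sum_moments_div_fact_le_exp_minus_one:
  fixes \<mu> :: "nat \<Rightarrow> real" and s :: real
  assumes nonneg: "\<And>k. 0 \<le> \<mu> k" and "0 \<le> s"
    and odd_le_mean: "\<And>n. \<mu> (n + 1) \<le> (3/4 * \<mu> n + 4/3 * \<mu> (n + 2)) / 2"
    and even_le: "\<And>p. 1 \<le> p \<Longrightarrow> \<mu> (2 * p) \<le> 2 ^ (p + 1) * fact p * s ^ p"
  shows "(\<Sum>k<n. \<mu> (k + 2) / fact (k + 2)) \<le> exp (9/4 * s) - 1"
proof -
  define regrouped where "regrouped q = (direct_weight q + carried_weight q) * \<mu> (2 * q + 2)" for q
  have regrouped_le: "regrouped q \<le> (9/4 * s) ^ (q + 1) / fact (q + 1)" for q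
  proof -
    have weight_nonneg: "0 \<le> direct_weight q + carried_weight q"
      by (simp add: direct_weight_def carried_weight_def)
    have "regrouped q \<le> (direct_weight q + carried_weight q) * (2 ^ (q + 2) * fact (q + 1) * s ^ (q + 1))"
      unfolding regrouped_def using even_le[of "q + 1"] weight_nonneg
      by (intro mult_left_mono) (simp_all add: algebra_simps)
    also have "\<dots> = 2 ^ (q + 2) * fact (q + 1) * (direct_weight q + carried_weight q) * s ^ (q + 1)"
      by (simp only: ac_simps)
    also have "\<dots> \<le> (9/4) ^ (q + 1) / fact (q + 1) * s ^ (q + 1)"
      using scaled_weight_le_exp_coeff \<open>0 \<le> s\<close> by (intro mult_right_mono) simp_all
    also have "\<dots> = (9/4 * s) ^ (q + 1) / fact (q + 1)"
      by (subst power_mult_distrib) simp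
    finally show ?thesis .
  qed
  have "(\<Sum>k<n. \<mu> (k + 2) / fact (k + 2)) \<le> (\<Sum>k<2 * n. \<mu> (k + 2) / fact (k + 2))"
    using nonneg by (intro sum_mono2) auto
  also have "\<dots> \<le> (\<Sum>q<n. regrouped q) + carried_weight n * \<mu> (2 * n + 2)"
    unfolding regrouped_def using odd_le_mean by (rule sum_double_le_regrouped)
  also have "\<dots> \<le> (\<Sum>q<Suc n. regrouped q)"
    using nonneg[of "2 * n + 2"] by (simp add: regrouped_def direct_weight_def algebra_simps)
  also have "\<dots> \<le> (\<Sum>q<Suc n. (9/4 * s) ^ (q + 1) / fact (q + 1))"
    by (intro sum_mono regrouped_le)
  also have "\<dots> \<le> exp (9/4 * s) - 1"
    using \<open>0 \<le> s\<close> by (intro sum_power_div_fact_le_exp_minus_one) simp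
  finally show ?thesis .
qed

lemma (in prob_space) abs_moment_sums_le_exp_minus_one:
  fixes X :: "'a \<Rightarrow> real" and l :: real
  assumes "X \<in> borel_measurable M"
    and even_moments: "\<And>p. 1 \<le> p \<Longrightarrow>
      (\<integral>\<^sup>+ x. ennreal (\<bar>X x\<bar> ^ (2 * p)) \<partial>M) \<le> ennreal (2 ^ (p + 1) * fact p)"
  shows "(\<Sum>k<n. \<bar>l\<bar> ^ (k + 2) * expectation (\<lambda>x. \<bar>X x\<bar> ^ (k + 2)) / fact (k + 2))
    \<le> exp (9/4 * l\<^sup>2) - 1"
proof -
  have abs_power_measurable: "(\<lambda>x. \<bar>X x\<bar> ^ k) \<in> borel_measurable M" for k
    using assms(1) by measurable
  have integrable: "integrable M (\<lambda>x. \<bar>X x\<bar> ^ k)" for k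
  proof (rule integrable_abs_power_le[OF assms(1)])
    show "integrable M (\<lambda>x. \<bar>X x\<bar> ^ (2 * (k + 1)))"
      using even_moments[of "k + 1"]
      by (intro integrableI_nonneg abs_power_measurable) (auto intro: le_less_trans)
  qed simp
  define \<mu> where "\<mu> k = \<bar>l\<bar> ^ k * expectation (\<lambda>x. \<bar>X x\<bar> ^ k)" for k
  have \<mu>_eq: "\<mu> k = expectation (\<lambda>x. (\<bar>l\<bar> * \<bar>X x\<bar>) ^ k)" for k
    by (simp add: \<mu>_def power_mult_distrib)
  have scaled_integrable: "integrable M (\<lambda>x. (\<bar>l\<bar> * \<bar>X x\<bar>) ^ k)" for k
    unfolding power_mult_distrib by (intro integrable_mult_right integrable)
  have "(\<Sum>k<n. \<mu> (k + 2) / fact (k + 2)) \<le> exp (9/4 * l\<^sup>2) - 1"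
  proof (rule sum_moments_div_fact_le_exp_minus_one)
    show "0 \<le> \<mu> k" for k
      by (simp add: \<mu>_def)
    show "\<mu> (n + 1) \<le> (3/4 * \<mu> n + 4/3 * \<mu> (n + 2)) / 2" for n
    proof -
      have "\<mu> (n + 1) \<le> (3/4 * \<mu> n + \<mu> (n + 2) / (3/4)) / 2"
        unfolding \<mu>_eq by (intro integral_power_Suc_le_mean scaled_integrable) simp_all
      then show ?thesis by simp
    qed
    show "\<mu> (2 * p) \<le> 2 ^ (p + 1) * fact p * (l\<^sup>2) ^ p" if "1 \<le> p" for p
    proof -
      have "expectation (\<lambda>x. \<bar>X x\<bar> ^ (2 * p)) \<le> 2 ^ (p + 1) * fact p"
        using integral_real_bounded[OF _ even_moments[OF that]] by simp
      then have "(l\<^sup>2) ^ p * expectation (\<lambda>x. \<bar>X x\<bar> ^ (2 * p)) \<le> (l\<^sup>2) ^ p * (2 ^ (p + 1) * fact p)"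
        by (intro mult_left_mono) simp_all
      also have "\<dots> = 2 ^ (p + 1) * fact p * (l\<^sup>2) ^ p"
        by (simp only: mult_ac)
      finally show ?thesis
        by (simp add: \<mu>_def power_mult)
    qed
  qed simp
  then show ?thesis
    by (simp add: \<mu>_def)
qed

theorem lemma3:
  fixes M :: "'a measure" and X :: "'a \<Rightarrow> real" and l :: real
  assumes "prob_space M"
    and "X \<in> borel_measurable M"
    and "\<And>p::nat. p \<ge> 1 \<Longrightarrow>
           (\<integral>\<^sup>+ x. ennreal (\<bar>X x\<bar> ^ (2 * p)) \<partial>M) \<le> ennreal (2 ^ (p + 1) * fact p)"
  shows "summable (\<lambda>k. l ^ (k + 2) / fact (k + 2) * prob_space.expectation M (\<lambda>x. \<bar>X x\<bar> ^ (k + 2))) \<and>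
         1 + (\<Sum>k. l ^ (k + 2) / fact (k + 2) * prob_space.expectation M (\<lambda>x. \<bar>X x\<bar> ^ (k + 2)))
           \<le> exp (9 * l ^ 2 / 4)"
proof -
  interpret prob_space M by fact
  have "(\<Sum>k<n. \<bar>l ^ (k + 2) / fact (k + 2) * expectation (\<lambda>x. \<bar>X x\<bar> ^ (k + 2))\<bar>)
      \<le> exp (9 * l ^ 2 / 4) - 1" for n
    using abs_moment_sums_le_exp_minus_one[OF assms(2,3), of l n]
    by (simp add: abs_mult power_abs mult_ac)
  from summable_and_suminf_le_if_abs_sums_le[OF this] show ?thesis
    by simp
qed

end
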